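(* Let $w\in W$ and $\alpha\in\Phi^+\cap w\Phi^-$. The following are equivalent: (1) $w^{-1}\alpha\in-\Pi$; (2) $\alpha$ is a maximal element of $\Phi^+\cap w\Phi^-$ with respect to $\prec_w$; (3) there are no $\beta,\gamma\in\Phi^+\cap w\Phi^-$ with $\alpha=\beta+\gamma$, and there is no $\beta\in\Phi^+\cap w\Phi^-$ with $\alpha\prec\beta$, $(\alpha,\beta)=1$ and $\beta-\alpha\notin\Phi^+\cap w\Phi^-$.
   Context: $\Phi$ is a simply laced root system with positive roots $\Phi^+$, $\Phi^-=-\Phi^+$, simple roots $\Pi$, Weyl group $W$; the scalar product is normalized so that $(\alpha,\alpha)=2$ for all roots. For roots, $\alpha\prec\beta$ means $\beta-\alpha$ is a nonzero sum of positive roots; for $w\in W$, $\alpha\prec_w\beta$ means $w^{-1}\alpha\prec w^{-1}\beta$. *)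

theory Defs
  imports "HOL-Analysis.Analysis"
begin

definition refl_root :: "'a::real_inner \<Rightarrow> 'a \<Rightarrow> 'a" where
  "refl_root a x = x - (2 * (x \<bullet> a) / (a \<bullet> a)) *\<^sub>R a"

definition root_system :: "'a::euclidean_space set \<Rightarrow> bool" where
  "root_system R \<longleftrightarrow> finite R \<and> 0 \<notin> R
     \<and> (\<forall>a\<in>R. \<forall>b\<in>R. refl_root a b \<in> R)
     \<and> (\<forall>a\<in>R. \<forall>b\<in>R. 2 * (b \<bullet> a) / (a \<bullet> a) \<in> \<int>)
     \<and> (\<forall>a\<in>R. \<forall>c::real. c *\<^sub>R a \<in> R \<longrightarrow> c = 1 \<or> c = -1)"

definition simply_laced_root_system :: "'a::euclidean_space set \<Rightarrow> bool" where
  "simply_laced_root_system R \<longleftrightarrow> root_system R \<and> (\<forall>a\<in>R. a \<bullet> a = 2)"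

definition nonneg_int_comb :: "'a::real_vector set \<Rightarrow> 'a set" where
  "nonneg_int_comb P = {x. \<exists>c::'a \<Rightarrow> nat. x = (\<Sum>p\<in>P. real (c p) *\<^sub>R p)}"

definition simple_system :: "'a::euclidean_space set \<Rightarrow> 'a set \<Rightarrow> bool" where
  "simple_system R P \<longleftrightarrow> P \<subseteq> R \<and> independent P
     \<and> (\<forall>a\<in>R. a \<in> nonneg_int_comb P \<or> - a \<in> nonneg_int_comb P)"

definition pos_roots :: "'a::euclidean_space set \<Rightarrow> 'a set \<Rightarrow> 'a set" where
  "pos_roots R P = R \<inter> nonneg_int_comb P"

definition neg_roots :: "'a::euclidean_space set \<Rightarrow> 'a set \<Rightarrow> 'a set" where
  "neg_roots R P = uminus ` pos_roots R P"

inductive_set weyl_group :: "'a::euclidean_space set \<Rightarrow> ('a \<Rightarrow> 'a) set" for R where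
  weyl_id: "id \<in> weyl_group R"
| weyl_step: "a \<in> R \<Longrightarrow> w \<in> weyl_group R \<Longrightarrow> refl_root a \<circ> w \<in> weyl_group R"

definition root_prec :: "'a::euclidean_space set \<Rightarrow> 'a set \<Rightarrow> 'a \<Rightarrow> 'a \<Rightarrow> bool" where
  "root_prec R P a b \<longleftrightarrow>
     b - a \<noteq> 0 \<and> (\<exists>xs. xs \<noteq> [] \<and> set xs \<subseteq> pos_roots R P \<and> b - a = sum_list xs)"

definition root_prec_w :: "'a::euclidean_space set \<Rightarrow> 'a set \<Rightarrow> ('a \<Rightarrow> 'a) \<Rightarrow> 'a \<Rightarrow> 'a \<Rightarrow> bool" where
  "root_prec_w R P w a b \<longleftrightarrow> root_prec R P (inv w a) (inv w b)"

end

theory Submission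
  imports Defs
begin

text \<open>Write \<open>\<alpha> = w n\<close> with \<open>n\<close> a negative root; the elements of \<open>N = \<Phi>\<^sup>+ \<inter> w\<Phi>\<^sup>-\<close> are the
  \<open>w m\<close> with \<open>m\<close> negative and \<open>w m\<close> positive, and since \<open>w\<close> is an isometry permuting the
  roots, all three conditions can be tested on \<open>-n\<close>. If \<open>-n\<close> is simple they hold, because
  a simple root dominates no positive root other than itself. Otherwise there is a simple
  root \<open>q\<close> with \<open>(-n, q) = 1\<close> and \<open>-n - q\<close> positive. If \<open>w q\<close> is positive, then
  \<open>\<beta> = w (n + q) = \<alpha> + w q\<close> is in \<open>N\<close>, with \<open>(\<alpha>, \<beta>) = 1\<close> and \<open>\<beta> - \<alpha> = w q \<notin> N\<close>. If \<open>w q\<close> is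
  negative, then \<open>w (-q) \<in> N\<close> lies above \<open>\<alpha>\<close> in \<open>\<prec>\<^sub>w\<close>, and \<open>\<alpha> = w (-q) + w (n + q)\<close> is either
  a sum of two elements of \<open>N\<close> or exhibits \<open>w (-q)\<close> as a forbidden \<open>\<beta>\<close> in (3).\<close>

lemma orthogonal_transformation_refl_root: "orthogonal_transformation (refl_root a)"
proof (cases "a = 0")
  case True
  have "refl_root 0 = (\<lambda>x::'a. x)" by (intro ext) (simp add: refl_root_def)
  then show ?thesis using True by simp
next
  case False
  have "linear (refl_root a)"
    unfolding refl_root_def
    by (rule linearI) (simp_all add: inner_add_left add_divide_distrib scaleR_add_left algebra_simps)
  moreover have "refl_root a x \<bullet> refl_root a y = x \<bullet> y" for x y
  proof -
    define c where "c = 2 * (x \<bullet> a) / (a \<bullet> a)"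
    define d where "d = 2 * (y \<bullet> a) / (a \<bullet> a)"
    have cancel: "c * d * (a \<bullet> a) = d * (x \<bullet> a) + c * (y \<bullet> a)"
      using False by (simp add: c_def d_def field_simps)
    have "refl_root a x \<bullet> refl_root a y = (x - c *\<^sub>R a) \<bullet> (y - d *\<^sub>R a)"
      by (simp add: refl_root_def c_def d_def)
    also have "\<dots> = x \<bullet> y - d * (x \<bullet> a) - c * (y \<bullet> a) + c * d * (a \<bullet> a)"
      by (simp add: inner_diff_left inner_diff_right inner_commute[of a y] algebra_simps)
    also have "\<dots> = x \<bullet> y"
      using cancel by linarith
    finally show ?thesis .
  qed
  ultimately show ?thesis unfolding orthogonal_transformation_def by blast
qed

lemma weyl_group_orthogonal_transformation:
  "w \<in> weyl_group R \<Longrightarrow> orthogonal_transformation w"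
proof (induction rule: weyl_group.induct)
  case weyl_id
  then show ?case by (simp add: id_def)
next
  case (weyl_step a w)
  then show ?case by (intro orthogonal_transformation_compose orthogonal_transformation_refl_root)
qed

lemma weyl_group_maps_roots:
  assumes "w \<in> weyl_group R" and "\<And>a b. a \<in> R \<Longrightarrow> b \<in> R \<Longrightarrow> refl_root a b \<in> R"
  shows "w ` R \<subseteq> R"
  using assms(1) by (induction rule: weyl_group.induct) (auto intro: assms(2))

lemma mem_uminus_image_iff: "(x::'a::group_add) \<in> uminus ` A \<longleftrightarrow> - x \<in> A"
  by (metis image_iff minus_minus)

lemma mem_neg_roots_iff: "m \<in> neg_roots R P \<longleftrightarrow> - m \<in> pos_roots R P"
  unfolding neg_roots_def by (rule mem_uminus_image_iff)

lemma nonneg_int_comb_zero: "0 \<in> nonneg_int_comb P"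
  unfolding nonneg_int_comb_def by (auto intro: exI[of _ "\<lambda>_. 0"])

lemma nonneg_int_comb_add:
  assumes "x \<in> nonneg_int_comb P" and "y \<in> nonneg_int_comb P"
  shows "x + y \<in> nonneg_int_comb P"
proof -
  obtain c d where "x = (\<Sum>p\<in>P. real (c p) *\<^sub>R p)" and "y = (\<Sum>p\<in>P. real (d p) *\<^sub>R p)"
    using assms unfolding nonneg_int_comb_def by blast
  then have "x + y = (\<Sum>p\<in>P. real (c p + d p) *\<^sub>R p)"
    by (simp add: sum.distrib scaleR_add_left)
  then show ?thesis unfolding nonneg_int_comb_def by (intro CollectI exI)
qed

lemma nonneg_int_comb_sum_list:
  "set xs \<subseteq> nonneg_int_comb P \<Longrightarrow> sum_list xs \<in> nonneg_int_comb P"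
  by (induction xs) (auto intro: nonneg_int_comb_zero nonneg_int_comb_add)

lemma sum_delta_scaleR:
  fixes P :: "'a::real_vector set"
  assumes "finite P" and "q \<in> P"
  shows "(\<Sum>p\<in>P. real (if p = q then 1 else 0) *\<^sub>R p) = q"
proof -
  have "(\<Sum>p\<in>P. real (if p = q then 1 else 0) *\<^sub>R p) = (\<Sum>p\<in>P. if p = q then p else 0)"
    by (rule sum.cong) auto
  then show ?thesis using assms by (simp add: sum.delta)
qed

lemma mem_nonneg_int_comb:
  assumes "finite P" and "q \<in> P"
  shows "q \<in> nonneg_int_comb P"
  unfolding nonneg_int_comb_def using sum_delta_scaleR[OF assms, symmetric] by (intro CollectI exI)

lemma root_prec_imp_nonneg_int_comb:
  assumes "root_prec R P a b"
  shows "b \<noteq> a \<and> b - a \<in> nonneg_int_comb P"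
proof -
  obtain xs where "set xs \<subseteq> pos_roots R P" and "b - a = sum_list xs"
    using assms unfolding root_prec_def by blast
  then have "b - a \<in> nonneg_int_comb P"
    using nonneg_int_comb_sum_list[of xs P] by (auto simp: pos_roots_def)
  then show ?thesis using assms by (simp add: root_prec_def)
qed

lemma independent_coeff_unique:
  fixes P :: "'a::real_vector set"
  assumes "finite P" and "independent P" and "(\<Sum>p\<in>P. f p *\<^sub>R p) = (\<Sum>p\<in>P. g p *\<^sub>R p)"
    and "q \<in> P"
  shows "f q = g q"
proof (rule ccontr)
  assume "f q \<noteq> g q"
  moreover have "(\<Sum>p\<in>P. (f p - g p) *\<^sub>R p) = 0"
    using assms(3) by (simp add: scaleR_diff_left sum_subtractf)
  ultimately have "dependent P"
    using assms(4) unfolding real_vector.dependent_finite[OF assms(1)]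
    by (intro exI[of _ "\<lambda>p. f p - g p"]) auto
  then show False using assms(2) by simp
qed

lemma nonneg_int_comb_antisym:
  fixes P :: "'a::real_vector set"
  assumes "finite P" and "independent P"
    and "x \<in> nonneg_int_comb P" and "- x \<in> nonneg_int_comb P"
  shows "x = 0"
proof -
  obtain c d where c: "x = (\<Sum>p\<in>P. real (c p) *\<^sub>R p)" and d: "- x = (\<Sum>p\<in>P. real (d p) *\<^sub>R p)"
    using assms(3,4) unfolding nonneg_int_comb_def by blast
  have "(\<Sum>p\<in>P. real (c p + d p) *\<^sub>R p) = (\<Sum>p\<in>P. 0 *\<^sub>R p)"
    by (simp add: scaleR_add_left sum.distrib flip: c d)
  then have "c p = 0" if "p \<in> P" for p
    using independent_coeff_unique[OF assms(1,2) _ that,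
        of "\<lambda>p. real (c p + d p)" "\<lambda>_. 0"] by simp
  then show ?thesis unfolding c by simp
qed

lemma nonneg_int_comb_below_basis:
  fixes P :: "'a::real_vector set"
  assumes fin: "finite P" and indep: "independent P" and q: "q \<in> P"
    and u: "u \<in> nonneg_int_comb P" and below: "q - u \<in> nonneg_int_comb P" and "u \<noteq> 0"
  shows "u = q"
proof -
  obtain c d where c: "u = (\<Sum>p\<in>P. real (c p) *\<^sub>R p)" and d: "q - u = (\<Sum>p\<in>P. real (d p) *\<^sub>R p)"
    using u below unfolding nonneg_int_comb_def by blast
  have "(\<Sum>p\<in>P. real (c p + d p) *\<^sub>R p) = (\<Sum>p\<in>P. real (if p = q then 1 else 0) *\<^sub>R p)"
    by (simp add: scaleR_add_left sum.distrib sum_delta_scaleR[OF fin q] flip: c d)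
  then have cd: "c p + d p = (if p = q then 1 else 0)" if "p \<in> P" for p
    using independent_coeff_unique[OF fin indep _ that,
        of "\<lambda>p. real (c p + d p)" "\<lambda>p. real (if p = q then 1 else 0)"]
    by (simp only: of_nat_eq_iff)
  have "u = (\<Sum>p\<in>P. if p = q then real (c q) *\<^sub>R p else 0)"
    unfolding c
  proof (rule sum.cong)
    fix p assume "p \<in> P"
    then show "real (c p) *\<^sub>R p = (if p = q then real (c q) *\<^sub>R p else 0)"
      using cd[of p] by (cases "p = q") auto
  qed simp
  also have "\<dots> = real (c q) *\<^sub>R q"
    using fin q by (simp add: sum.delta)
  finally have uq: "u = real (c q) *\<^sub>R q" .
  then have "c q \<noteq> 0" using \<open>u \<noteq> 0\<close> by auto
  moreover have "c q \<le> 1" using cd[OF q] by simp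
  ultimately have "c q = 1" by linarith
  then show ?thesis using uq by simp
qed

locale simply_laced_with_base =
  fixes R P :: "'a::euclidean_space set"
  assumes simply_laced: "simply_laced_root_system R"
    and simple: "simple_system R P"
begin

lemma finite_roots: "finite R"
  using simply_laced by (simp add: simply_laced_root_system_def root_system_def)

lemma zero_notin_roots: "0 \<notin> R"
  using simply_laced by (simp add: simply_laced_root_system_def root_system_def)

lemma refl_root_in_roots: "a \<in> R \<Longrightarrow> b \<in> R \<Longrightarrow> refl_root a b \<in> R"
  using simply_laced by (simp add: simply_laced_root_system_def root_system_def)

lemma inner_root_self: "a \<in> R \<Longrightarrow> a \<bullet> a = 2"
  using simply_laced by (simp add: simply_laced_root_system_def)

lemma inner_roots_Ints:
  assumes "a \<in> R" and "b \<in> R"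
  shows "a \<bullet> b \<in> \<int>"
proof -
  have "2 * (a \<bullet> b) / (b \<bullet> b) \<in> \<int>"
    using simply_laced assms unfolding simply_laced_root_system_def root_system_def by blast
  then show ?thesis using inner_root_self[OF assms(2)] by simp
qed

lemma simple_subset_roots: "P \<subseteq> R"
  using simple by (simp add: simple_system_def)

lemma independent_simple: "independent P"
  using simple by (simp add: simple_system_def)

lemma finite_simple: "finite P"
  using finite_roots simple_subset_roots finite_subset by blast

lemma refl_root_eq: "a \<in> R \<Longrightarrow> refl_root a b = b - (b \<bullet> a) *\<^sub>R a"
  by (simp add: refl_root_def inner_root_self)

lemma uminus_root_in_roots: "a \<in> R \<Longrightarrow> - a \<in> R"
  using refl_root_in_roots[of a a] by (simp add: refl_root_eq inner_root_self scaleR_2)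

lemma diff_roots_in_roots: "a \<in> R \<Longrightarrow> b \<in> R \<Longrightarrow> a \<bullet> b = 1 \<Longrightarrow> b - a \<in> R"
  using refl_root_in_roots[of a b] by (simp add: refl_root_eq inner_commute)

lemma inner_roots_le_1:
  assumes "a \<in> R" and "b \<in> R" and "a \<noteq> b"
  shows "a \<bullet> b \<le> 1"
proof -
  have "0 < (a - b) \<bullet> (a - b)" using assms(3) by simp
  also have "\<dots> = 4 - 2 * (a \<bullet> b)"
    using assms(1,2) by (simp add: inner_diff_left inner_diff_right inner_commute inner_root_self)
  finally have "a \<bullet> b < 2" by simp
  moreover obtain k where "a \<bullet> b = of_int k"
    using inner_roots_Ints[OF assms(1,2)] by (elim Ints_cases)
  ultimately show ?thesis by simp
qed

lemma pos_roots_subset_roots: "pos_roots R P \<subseteq> R"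
  by (simp add: pos_roots_def)

lemma zero_notin_pos_roots: "0 \<notin> pos_roots R P"
  using zero_notin_roots pos_roots_subset_roots by blast

lemma root_pos_or_neg: "r \<in> R \<Longrightarrow> r \<in> pos_roots R P \<or> - r \<in> pos_roots R P"
  using simple uminus_root_in_roots[of r] by (auto simp: simple_system_def pos_roots_def)

lemma simple_in_pos_roots: "q \<in> P \<Longrightarrow> q \<in> pos_roots R P"
  using simple_subset_roots mem_nonneg_int_comb[OF finite_simple] by (auto simp: pos_roots_def)

lemma pos_root_not_neg: "r \<in> pos_roots R P \<Longrightarrow> - r \<notin> pos_roots R P"
  using nonneg_int_comb_antisym[OF finite_simple independent_simple] zero_notin_pos_roots
  by (fastforce simp: pos_roots_def)

lemma root_prec_of_pos_root: "b - a \<in> pos_roots R P \<Longrightarrow> root_prec R P a b"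
  using zero_notin_pos_roots unfolding root_prec_def
  by (intro conjI exI[of _ "[b - a]"]) auto

lemma pos_root_below_simple:
  "u \<in> pos_roots R P \<Longrightarrow> q \<in> P \<Longrightarrow> q - u \<in> nonneg_int_comb P \<Longrightarrow> u = q"
  using nonneg_int_comb_below_basis[OF finite_simple independent_simple] zero_notin_pos_roots
  by (auto simp: pos_roots_def)

lemma simple_minus_pos_root_not_pos:
  assumes "q \<in> P" and "u \<in> pos_roots R P"
  shows "q - u \<notin> pos_roots R P"
proof
  assume "q - u \<in> pos_roots R P"
  then have "u = q" using pos_root_below_simple assms by (simp add: pos_roots_def)
  with \<open>q - u \<in> pos_roots R P\<close> show False using zero_notin_pos_roots by simp
qed

lemma simple_not_sum_pos_roots:
  "q \<in> P \<Longrightarrow> u \<in> pos_roots R P \<Longrightarrow> v \<in> pos_roots R P \<Longrightarrow> q \<noteq> u + v"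
  using simple_minus_pos_root_not_pos by fastforce

lemma not_root_prec_uminus_simple:
  assumes "q \<in> P" and "u \<in> pos_roots R P"
  shows "\<not> root_prec R P (- q) (- u)"
proof
  assume "root_prec R P (- q) (- u)"
  moreover have "- u - - q = q - u" by simp
  ultimately have "u \<noteq> q" and "q - u \<in> nonneg_int_comb P"
    using root_prec_imp_nonneg_int_comb[of R P "- q" "- u"] by auto
  then show False using pos_root_below_simple assms by blast
qed

lemma pos_root_minus_simple:
  assumes t: "t \<in> pos_roots R P" and not_simple: "t \<notin> P"
  obtains q where "q \<in> P" and "t - q \<in> pos_roots R P" and "t \<bullet> q = 1"
proof -
  obtain c where c: "t = (\<Sum>p\<in>P. real (c p) *\<^sub>R p)"
    using t unfolding pos_roots_def nonneg_int_comb_def by blast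
  have tR: "t \<in> R" using t pos_roots_subset_roots by blast
  have "(\<Sum>p\<in>P. real (c p) * (t \<bullet> p)) = t \<bullet> t"
    by (subst (3) c) (simp add: inner_sum_right)
  also have "\<dots> = 2" using inner_root_self[OF tR] .
  finally have sum_eq: "(\<Sum>p\<in>P. real (c p) * (t \<bullet> p)) = 2" .
  have "\<exists>q\<in>P. 0 < t \<bullet> q"
  proof (rule ccontr)
    assume "\<not> (\<exists>q\<in>P. 0 < t \<bullet> q)"
    then have "(\<Sum>p\<in>P. real (c p) * (t \<bullet> p)) \<le> 0"
      by (intro sum_nonpos) (simp add: mult_nonneg_nonpos not_less)
    then show False using sum_eq by simp
  qed
  then obtain q where q: "q \<in> P" and pos: "0 < t \<bullet> q" by blast
  have qR: "q \<in> R" using q simple_subset_roots by blast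
  obtain k where k: "t \<bullet> q = of_int k"
    using inner_roots_Ints[OF tR qR] by (elim Ints_cases)
  moreover have "t \<bullet> q \<le> 1"
    using inner_roots_le_1[OF tR qR] q not_simple by blast
  ultimately have tq: "t \<bullet> q = 1" using pos by simp
  then have "t - q \<in> R" using diff_roots_in_roots[OF qR tR] by (simp add: inner_commute)
  moreover have "q - t \<notin> pos_roots R P"
    using simple_minus_pos_root_not_pos[OF q t] .
  ultimately have "t - q \<in> pos_roots R P" using root_pos_or_neg by force
  then show ?thesis using that q tq by blast
qed

end

locale simply_laced_weyl_element = simply_laced_with_base +
  fixes w :: "'a::euclidean_space \<Rightarrow> 'a"
  assumes weyl: "w \<in> weyl_group R"
begin

abbreviation inversion_set :: "'a set" where
  "inversion_set \<equiv> pos_roots R P \<inter> w ` neg_roots R P"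

lemma linear_w: "linear w"
  using weyl_group_orthogonal_transformation[OF weyl] orthogonal_transformation_linear by blast

lemma inner_w [simp]: "w x \<bullet> w y = x \<bullet> y"
  using weyl_group_orthogonal_transformation[OF weyl] by (simp add: orthogonal_transformation_def)

lemma inj_w: "inj w"
  using weyl_group_orthogonal_transformation[OF weyl] orthogonal_transformation_inj by blast

lemma inv_w_w [simp]: "inv w (w x) = x"
  using inj_w by simp

lemma w_add: "w (x + y) = w x + w y"
  using linear_add[OF linear_w] .

lemma w_uminus: "w (- x) = - w x"
  using linear_neg[OF linear_w] .

lemma w_diff: "w (x - y) = w x - w y"
  using linear_diff[OF linear_w] .

lemma w_root: "r \<in> R \<Longrightarrow> w r \<in> R"
  using weyl_group_maps_roots[OF weyl refl_root_in_roots] by blast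

lemma w_mem_image_neg_roots_iff [simp]: "w m \<in> w ` neg_roots R P \<longleftrightarrow> - m \<in> pos_roots R P"
  using inj_w by (simp add: mem_neg_roots_iff inj_image_mem_iff)

lemma w_add_mem_inversion_set:
  assumes "w n \<in> pos_roots R P" and "w q \<in> pos_roots R P" and nq: "- n - q \<in> pos_roots R P"
  shows "w (n + q) \<in> inversion_set"
proof -
  have "- (- n - q) \<in> R" using uminus_root_in_roots nq pos_roots_subset_roots by blast
  then have "w (n + q) \<in> R" using w_root by (simp add: add.commute)
  moreover have "w (n + q) \<in> nonneg_int_comb P"
    using assms(1,2) by (auto simp: w_add pos_roots_def intro: nonneg_int_comb_add)
  ultimately show ?thesis using nq by (simp add: pos_roots_def add.commute)
qed

lemma not_simple_imp_root_prec_inversion: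
  assumes n: "- n \<in> pos_roots R P" and wn: "w n \<in> pos_roots R P" and not_simple: "- n \<notin> P"
  shows "\<exists>\<beta>\<in>inversion_set. root_prec R P n (inv w \<beta>)"
proof -
  obtain q where q: "q \<in> P" and nq: "- n - q \<in> pos_roots R P" and "- n \<bullet> q = 1"
    using pos_root_minus_simple[OF n not_simple] by blast
  have qR: "q \<in> R" and q_pos: "q \<in> pos_roots R P"
    using q simple_subset_roots simple_in_pos_roots by auto
  consider "w (- q) \<in> pos_roots R P" | "w q \<in> pos_roots R P"
    using root_pos_or_neg[OF w_root[OF qR]] by (auto simp: w_uminus)
  then show ?thesis
  proof cases
    case 1
    then have "w (- q) \<in> inversion_set" using q_pos by (simp add: w_mem_image_neg_roots_iff)
    moreover have "root_prec R P n (- q)" using nq by (intro root_prec_of_pos_root) (metis add.commute diff_conv_add_uminus)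
    ultimately show ?thesis by (metis inv_w_w)
  next
    case 2
    have "w (n + q) \<in> inversion_set" using w_add_mem_inversion_set[OF wn 2 nq] .
    moreover have "root_prec R P n (n + q)" using q_pos by (intro root_prec_of_pos_root) simp
    ultimately show ?thesis by (metis inv_w_w)
  qed
qed

lemma maximal_iff_simple:
  assumes "- n \<in> pos_roots R P" and "w n \<in> pos_roots R P"
  shows "\<not> (\<exists>\<beta>\<in>inversion_set. root_prec R P n (inv w \<beta>)) \<longleftrightarrow> - n \<in> P"
proof
  assume "- n \<in> P"
  show "\<not> (\<exists>\<beta>\<in>inversion_set. root_prec R P n (inv w \<beta>))"
  proof
    assume "\<exists>\<beta>\<in>inversion_set. root_prec R P n (inv w \<beta>)"
    then obtain m where "- m \<in> pos_roots R P" and "root_prec R P n m"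
      by (auto simp: mem_neg_roots_iff)
    then show False using not_root_prec_uminus_simple[OF \<open>- n \<in> P\<close>] by force
  qed
qed (use assms not_simple_imp_root_prec_inversion in blast)

lemma simple_imp_indecomposable:
  assumes simple: "- n \<in> P"
  shows "\<not> (\<exists>\<beta>\<in>inversion_set. \<exists>\<gamma>\<in>inversion_set. w n = \<beta> + \<gamma>)
    \<and> \<not> (\<exists>\<beta>\<in>inversion_set. root_prec R P (w n) \<beta> \<and> w n \<bullet> \<beta> = 1 \<and> \<beta> - w n \<notin> inversion_set)"
proof (intro conjI notI)
  assume "\<exists>\<beta>\<in>inversion_set. \<exists>\<gamma>\<in>inversion_set. w n = \<beta> + \<gamma>"
  then obtain m1 m2 where "- m1 \<in> pos_roots R P" and "- m2 \<in> pos_roots R P" and "w n = w m1 + w m2"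
    by (auto simp: mem_neg_roots_iff)
  moreover from \<open>w n = w m1 + w m2\<close> have "- n = - m1 + - m2"
    using inj_w by (simp add: w_add[symmetric] inj_eq)
  ultimately show False using simple_not_sum_pos_roots[OF simple] by blast
next
  assume "\<exists>\<beta>\<in>inversion_set. root_prec R P (w n) \<beta> \<and> w n \<bullet> \<beta> = 1 \<and> \<beta> - w n \<notin> inversion_set"
  then obtain m where m: "- m \<in> pos_roots R P" and prec: "root_prec R P (w n) (w m)"
    and inner: "n \<bullet> m = 1" and not_inv: "w (m - n) \<notin> inversion_set"
    by (auto simp: mem_neg_roots_iff w_diff)
  have nR: "n \<in> R" and mR: "m \<in> R"
    using uminus_root_in_roots simple simple_subset_roots m pos_roots_subset_roots by force+
  have "w (m - n) \<in> R" using w_root diff_roots_in_roots[OF nR mR inner] by blast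
  then have "w (m - n) \<in> pos_roots R P"
    using root_prec_imp_nonneg_int_comb[OF prec] by (simp add: pos_roots_def w_diff)
  then have "- (m - n) \<notin> pos_roots R P" using not_inv by simp
  then have "m - n \<in> pos_roots R P"
    using root_pos_or_neg diff_roots_in_roots[OF nR mR inner] by blast
  then show False using simple_minus_pos_root_not_pos[OF simple m] by simp
qed

lemma not_simple_imp_decomposable:
  assumes n: "- n \<in> pos_roots R P" and wn: "w n \<in> pos_roots R P" and not_simple: "- n \<notin> P"
  shows "(\<exists>\<beta>\<in>inversion_set. \<exists>\<gamma>\<in>inversion_set. w n = \<beta> + \<gamma>)
    \<or> (\<exists>\<beta>\<in>inversion_set. root_prec R P (w n) \<beta> \<and> w n \<bullet> \<beta> = 1 \<and> \<beta> - w n \<notin> inversion_set)"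
proof -
  obtain q where q: "q \<in> P" and nq: "- n - q \<in> pos_roots R P" and nq_inner: "- n \<bullet> q = 1"
    using pos_root_minus_simple[OF n not_simple] by blast
  have qR: "q \<in> R" and q_pos: "q \<in> pos_roots R P"
    using q simple_subset_roots simple_in_pos_roots by auto
  have nqR: "n + q \<in> R"
    using uminus_root_in_roots[of "- n - q"] nq pos_roots_subset_roots by (auto simp: add.commute)
  consider "w (- q) \<in> pos_roots R P" | "w q \<in> pos_roots R P"
    using root_pos_or_neg[OF w_root[OF qR]] by (auto simp: w_uminus)
  then show ?thesis
  proof cases
    case 1
    have \<beta>: "w (- q) \<in> inversion_set" using 1 q_pos by simp
    consider "w (n + q) \<in> pos_roots R P" | "- w (n + q) \<in> pos_roots R P"
      using root_pos_or_neg[OF w_root[OF nqR]] by blast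
    then show ?thesis
    proof cases
      case 1
      then have "w (n + q) \<in> inversion_set" using nq by (simp add: add.commute)
      moreover have "w n = w (- q) + w (n + q)" by (simp add: w_add[symmetric])
      ultimately show ?thesis using \<beta> by blast
    next
      case 2
      have diff: "w (- q) - w n = - w (n + q)" by (simp add: w_add w_uminus)
      have "root_prec R P (w n) (w (- q))" using 2 diff by (intro root_prec_of_pos_root) simp
      moreover have "w n \<bullet> w (- q) = 1" using nq_inner by simp
      moreover have "w (- q) - w n \<notin> inversion_set"
        using pos_root_not_neg[OF nq] by (simp add: w_diff[symmetric] add.commute)
      ultimately show ?thesis using \<beta> by blast
    qed
  next
    case 2
    have "w (n + q) \<in> inversion_set" using w_add_mem_inversion_set[OF wn 2 nq] .
    moreover have "root_prec R P (w n) (w (n + q))" using 2 by (intro root_prec_of_pos_root) (simp add: w_add)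
    moreover have "n \<bullet> (n + q) = 1"
      using inner_root_self[of n] uminus_root_in_roots[of "- n"] n nq_inner pos_roots_subset_roots
      by (auto simp: inner_add_right)
    moreover have "w (n + q) - w n \<notin> inversion_set"
      using q_pos pos_root_not_neg by (simp add: w_add)
    ultimately show ?thesis by auto
  qed
qed

lemma indecomposable_iff_simple:
  assumes "- n \<in> pos_roots R P" and "w n \<in> pos_roots R P"
  shows "(\<not> (\<exists>\<beta>\<in>inversion_set. \<exists>\<gamma>\<in>inversion_set. w n = \<beta> + \<gamma>)
    \<and> \<not> (\<exists>\<beta>\<in>inversion_set. root_prec R P (w n) \<beta> \<and> w n \<bullet> \<beta> = 1 \<and> \<beta> - w n \<notin> inversion_set))
    \<longleftrightarrow> - n \<in> P"
  using simple_imp_indecomposable not_simple_imp_decomposable[OF assms] by blast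

end

theorem mainTheorem16:
  fixes R P :: "'a::euclidean_space set" and w :: "'a \<Rightarrow> 'a" and \<alpha> :: 'a
  assumes "simply_laced_root_system R"
    and "simple_system R P"
    and "w \<in> weyl_group R"
    and "\<alpha> \<in> pos_roots R P \<inter> w ` neg_roots R P"
  defines "N \<equiv> pos_roots R P \<inter> w ` neg_roots R P"
  shows "(inv w \<alpha> \<in> uminus ` P
            \<longleftrightarrow> \<not> (\<exists>\<beta>\<in>N. root_prec_w R P w \<alpha> \<beta>))
       \<and> (\<not> (\<exists>\<beta>\<in>N. root_prec_w R P w \<alpha> \<beta>)
            \<longleftrightarrow> (\<not> (\<exists>\<beta>\<in>N. \<exists>\<gamma>\<in>N. \<alpha> = \<beta> + \<gamma>)
                 \<and> \<not> (\<exists>\<beta>\<in>N. root_prec R P \<alpha> \<beta> \<and> \<alpha> \<bullet> \<beta> = 1 \<and> \<beta> - \<alpha> \<notin> N)))"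
proof -
  interpret simply_laced_weyl_element R P w
    using assms(1-3) by unfold_locales
  obtain n where n: "- n \<in> pos_roots R P" and \<alpha>: "\<alpha> = w n" and wn: "w n \<in> pos_roots R P"
    using assms(4) by (auto simp: mem_neg_roots_iff)
  have "inv w \<alpha> \<in> uminus ` P \<longleftrightarrow> - n \<in> P"
    by (simp add: \<alpha> mem_uminus_image_iff)
  then show ?thesis
    using maximal_iff_simple[OF n wn] indecomposable_iff_simple[OF n wn]
    unfolding N_def root_prec_w_def \<alpha> by simp
qed

end
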